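(* Let $\mathcal L$ be a finite atomic lattice. Identify each $x\in\bar{\mathcal L}$ with the simplex $\{a\in\mathcal A(\mathcal L): a\le x\}$ of $\Gamma(\mathcal L)$; this identifies $\bar{\mathcal L}$ with a subposet of $\mathcal F(\Gamma(\mathcal L))$ and hence $\Delta(\bar{\mathcal L})$ with a subcomplex of ${\rm Bd}(\Gamma(\mathcal L))$. Then ${\rm Bd}(\Gamma(\mathcal L))$ collapses onto $\Delta(\bar{\mathcal L})$. Consequently $\Gamma(\mathcal L)$ and $\Delta(\bar{\mathcal L})$ have the same simple homotopy type.
   Context: For a finite lattice $\mathcal L$ with minimum $\hat0$ and maximum $\hat1$, $\bar{\mathcal L}=\mathcal L\setminus\{\hat0,\hat1\}$, and $\mathcal A(\mathcal L)$ is the set of atoms (elements covering $\hat0$). $\mathcal L$ is atomic if every element is a join of atoms. The atom crosscut complex $\Gamma(\mathcal L)$ is the simplicial complex with vertex set $\mathcal A(\mathcal L)$ whose simplices are the nonempty subsets $\sigma\subseteq\mathcal A(\mathcal L)$ with $\bigvee\sigma\neq\hat1$. $\mathcal F(X)$ is the face poset, ${\rm Bd}(X)=\Delta(\mathcal F(X))$ the barycentric subdivision, $\Delta(Q)$ the order complex (simplices = nonempty chains). Same simple homotopy type means connected by a finite sequence of elementary collapses and expansions. *)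

theory Defs
  imports Main
begin

definition simplicial_complex :: "'v set set \<Rightarrow> bool" where
  "simplicial_complex K \<longleftrightarrow> finite K \<and>
     (\<forall>\<sigma>\<in>K. finite \<sigma> \<and> \<sigma> \<noteq> {}) \<and>
     (\<forall>\<sigma>\<in>K. \<forall>\<tau>. \<tau> \<subseteq> \<sigma> \<and> \<tau> \<noteq> {} \<longrightarrow> \<tau> \<in> K)"

definition order_complex :: "'b set \<Rightarrow> ('b \<Rightarrow> 'b \<Rightarrow> bool) \<Rightarrow> 'b set set" where
  "order_complex P le = {c. c \<subseteq> P \<and> c \<noteq> {} \<and> finite c \<and>
       (\<forall>x\<in>c. \<forall>y\<in>c. le x y \<or> le y x)}"

definition barycentric :: "'v set set \<Rightarrow> 'v set set set" where
  "barycentric X = order_complex X (\<subseteq>)"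

text \<open>Lattice notions. A finite lattice is modelled by a finite type that is a
complete lattice (every finite nonempty lattice is complete).\<close>

definition lattice_atoms :: "'a::complete_lattice set" where
  "lattice_atoms = {a. bot < a \<and> (\<forall>y. bot < y \<and> y \<le> a \<longrightarrow> y = a)}"

definition atomic_lattice :: "'a::complete_lattice itself \<Rightarrow> bool" where
  "atomic_lattice _ \<longleftrightarrow> (\<forall>x::'a. \<exists>S \<subseteq> lattice_atoms. x = Sup S)"

definition proper_part :: "'a::complete_lattice set" where
  "proper_part = UNIV - {bot, top}"

definition atom_crosscut :: "'a::complete_lattice set set" where
  "atom_crosscut = {\<sigma>. \<sigma> \<subseteq> lattice_atoms \<and> \<sigma> \<noteq> {} \<and> Sup \<sigma> \<noteq> top}"

definition atoms_below :: "'a::complete_lattice \<Rightarrow> 'a set" where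
  "atoms_below x = {a \<in> lattice_atoms. a \<le> x}"

definition elementary_collapse :: "'v set set \<Rightarrow> 'v set set \<Rightarrow> bool" where
  "elementary_collapse K K' \<longleftrightarrow> (\<exists>\<sigma> \<tau>. \<sigma> \<in> K \<and> \<tau> \<in> K \<and> \<sigma> \<subset> \<tau> \<and>
      card \<tau> = card \<sigma> + 1 \<and> (\<forall>\<rho>\<in>K. \<sigma> \<subseteq> \<rho> \<longrightarrow> \<rho> = \<sigma> \<or> \<rho> = \<tau>) \<and>
      K' = K - {\<sigma>, \<tau>})"

definition collapses_onto :: "'v set set \<Rightarrow> 'v set set \<Rightarrow> bool" where
  "collapses_onto K L \<longleftrightarrow> simplicial_complex K \<and> elementary_collapse\<^sup>*\<^sup>* K L"

definition sh_step :: "nat set set \<Rightarrow> nat set set \<Rightarrow> bool" where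
  "sh_step K K' \<longleftrightarrow> simplicial_complex K \<and> simplicial_complex K' \<and>
     (elementary_collapse K K' \<or> elementary_collapse K' K)"

text \<open>Same simple homotopy type (up to isomorphism): after relabelling vertices
injectively into nat (enough fresh vertices), the complexes are connected by a
finite sequence of elementary collapses and expansions.\<close>

definition same_simple_homotopy_type :: "'u set set \<Rightarrow> 'w set set \<Rightarrow> bool" where
  "same_simple_homotopy_type K L \<longleftrightarrow> simplicial_complex K \<and> simplicial_complex L \<and>
     (\<exists>(f::'u \<Rightarrow> nat) (g::'w \<Rightarrow> nat). inj_on f (\<Union>K) \<and> inj_on g (\<Union>L) \<and>
        sh_step\<^sup>*\<^sup>* ((`) f ` K) ((`) g ` L))"

end

theory Submission
  imports Defs
begin

text \<open>For a face p of \<open>\<Gamma>(L)\<close> let cl p be the set of atoms below \<open>\<Squnion>p\<close>. As L is atomic,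
  sending x to the atoms below it is an order embedding of \<open>L - {\<bottom>, \<top>}\<close> onto the closed
  faces cl p, so \<open>\<Delta>(L - {\<bottom>, \<top>})\<close> is the order complex of the closed faces inside
  \<open>Bd(\<Gamma>(L))\<close>. The non-closed faces x are deleted from the face poset one at a time, largest
  first: every face comparable with x is comparable with cl x, so the star of x is a cone with
  apex cl x and collapses away.

  For the second claim, a complex K and \<open>Bd(K)\<close> have the same simple homotopy type: subdividing
  the faces of K stellarly, largest first, each subdivision is an expansion followed by a
  collapse.\<close>

section \<open>Elementary collapses\<close>

definition relabel :: "('u \<Rightarrow> 'w) \<Rightarrow> 'u set set \<Rightarrow> 'w set set" where
  "relabel h K = (`) h ` K"

lemma relabel_comp: "relabel h (relabel g K) = relabel (h \<circ> g) K"
  unfolding relabel_def by (simp add: image_comp)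

lemma simplicial_complexD:
  assumes "simplicial_complex K"
  shows "finite K" and "\<sigma> \<in> K \<Longrightarrow> finite \<sigma>" and "\<sigma> \<in> K \<Longrightarrow> \<sigma> \<noteq> {}"
    and "\<sigma> \<in> K \<Longrightarrow> \<tau> \<subseteq> \<sigma> \<Longrightarrow> \<tau> \<noteq> {} \<Longrightarrow> \<tau> \<in> K"
  using assms unfolding simplicial_complex_def by blast+

lemma simplicial_complex_finite_vertexI:
  fixes K :: "'v::finite set set"
  assumes "\<And>\<sigma>. \<sigma> \<in> K \<Longrightarrow> \<sigma> \<noteq> {}" "\<And>\<sigma> \<tau>. \<sigma> \<in> K \<Longrightarrow> \<tau> \<subseteq> \<sigma> \<Longrightarrow> \<tau> \<noteq> {} \<Longrightarrow> \<tau> \<in> K"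
  shows "simplicial_complex K"
  using assms unfolding simplicial_complex_def by (simp add: finite_subset)

lemma simplicial_complex_subcomplex:
  assumes "simplicial_complex K" "L \<subseteq> K"
    "\<And>\<sigma> \<tau>. \<sigma> \<in> L \<Longrightarrow> \<tau> \<subseteq> \<sigma> \<Longrightarrow> \<tau> \<noteq> {} \<Longrightarrow> \<tau> \<in> L"
  shows "simplicial_complex L"
  using assms unfolding simplicial_complex_def by (meson finite_subset subsetD)

lemma simplicial_complex_order_complex:
  assumes "finite P"
  shows "simplicial_complex (order_complex P le)"
proof -
  have "order_complex P le \<subseteq> Pow P"
    unfolding order_complex_def by blast
  then have "finite (order_complex P le)"
    using assms by (meson finite_Pow_iff finite_subset)
  then show ?thesis
    unfolding simplicial_complex_def order_complex_def
    by (auto intro: finite_subset)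
qed

lemma simplicial_complex_barycentric:
  "simplicial_complex K \<Longrightarrow> simplicial_complex (barycentric K)"
  unfolding barycentric_def by (intro simplicial_complex_order_complex simplicial_complexD(1))

lemma simplicial_complex_elementary_collapse:
  assumes K: "simplicial_complex K" and "elementary_collapse K K'"
  shows "simplicial_complex K'"
proof -
  obtain \<sigma> \<tau> where "\<sigma> \<subset> \<tau>" and free: "\<forall>\<rho>\<in>K. \<sigma> \<subseteq> \<rho> \<longrightarrow> \<rho> = \<sigma> \<or> \<rho> = \<tau>"
    and "K' = K - {\<sigma>, \<tau>}"
    using assms(2) unfolding elementary_collapse_def by blast
  show ?thesis
  proof (rule simplicial_complex_subcomplex[OF K])
    show "K' \<subseteq> K"
      using \<open>K' = K - {\<sigma>, \<tau>}\<close> by blast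
    fix \<rho> \<rho>' assume "\<rho> \<in> K'" "\<rho>' \<subseteq> \<rho>" "\<rho>' \<noteq> {}"
    moreover have "\<rho>' \<noteq> \<sigma>" "\<rho>' \<noteq> \<tau>"
      using calculation free \<open>\<sigma> \<subset> \<tau>\<close> \<open>K' = K - {\<sigma>, \<tau>}\<close> by blast+
    ultimately show "\<rho>' \<in> K'"
      using simplicial_complexD(4)[OF K] \<open>K' = K - {\<sigma>, \<tau>}\<close> by blast
  qed
qed

lemma simplicial_complex_collapses:
  assumes "simplicial_complex K" "elementary_collapse\<^sup>*\<^sup>* K L"
  shows "simplicial_complex L"
  using assms(2,1)
  by induction (auto intro: simplicial_complex_elementary_collapse)

lemma simplicial_complex_relabel:
  assumes "inj h" and K: "simplicial_complex K"
  shows "simplicial_complex (relabel h K)"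
proof -
  have "\<tau> \<in> relabel h K" if "\<sigma> \<in> K" "\<tau> \<subseteq> h ` \<sigma>" "\<tau> \<noteq> {}" for \<sigma> \<tau>
  proof -
    have "\<tau> = h ` (\<sigma> \<inter> h -` \<tau>)" "\<sigma> \<inter> h -` \<tau> \<noteq> {}"
      using that(2,3) by blast+
    then show ?thesis
      using simplicial_complexD(4)[OF K that(1)] unfolding relabel_def by blast
  qed
  then have "\<forall>\<sigma>'\<in>relabel h K. \<forall>\<tau>. \<tau> \<subseteq> \<sigma>' \<and> \<tau> \<noteq> {} \<longrightarrow> \<tau> \<in> relabel h K"
    unfolding relabel_def by blast
  moreover have "finite (relabel h K)"
    unfolding relabel_def using simplicial_complexD(1)[OF K] by simp
  moreover have "\<forall>\<sigma>'\<in>relabel h K. finite \<sigma>' \<and> \<sigma>' \<noteq> {}"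
    unfolding relabel_def using simplicial_complexD(2,3)[OF K] by blast
  ultimately show ?thesis
    unfolding simplicial_complex_def by blast
qed

lemma elementary_collapse_relabel:
  assumes "inj h" "elementary_collapse K K'"
  shows "elementary_collapse (relabel h K) (relabel h K')"
proof -
  obtain \<sigma> \<tau> where st: "\<sigma> \<in> K" "\<tau> \<in> K" "\<sigma> \<subset> \<tau>" "card \<tau> = card \<sigma> + 1"
    "\<forall>\<rho>\<in>K. \<sigma> \<subseteq> \<rho> \<longrightarrow> \<rho> = \<sigma> \<or> \<rho> = \<tau>" "K' = K - {\<sigma>, \<tau>}"
    using assms(2) unfolding elementary_collapse_def by blast
  have inj_image: "inj ((`) h)"
    using assms(1) by (simp add: inj_on_def inj_image_eq_iff)
  show ?thesis
    unfolding elementary_collapse_def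
  proof (intro exI conjI ballI impI)
    show "h ` \<sigma> \<in> relabel h K" "h ` \<tau> \<in> relabel h K"
      using st(1,2) unfolding relabel_def by blast+
    show "h ` \<sigma> \<subset> h ` \<tau>"
      using st(3) assms(1) by (simp add: inj_image_subset_iff inj_image_eq_iff psubset_eq)
    show "card (h ` \<tau>) = card (h ` \<sigma>) + 1"
      using st(4) assms(1) by (simp add: card_image inj_on_subset)
    show "relabel h K' = relabel h K - {h ` \<sigma>, h ` \<tau>}"
      unfolding relabel_def st(6) by (simp add: image_set_diff[OF inj_image])
    fix \<rho> assume \<rho>: "\<rho> \<in> relabel h K" "h ` \<sigma> \<subseteq> \<rho>"
    then obtain r where "r \<in> K" "\<rho> = h ` r"
      unfolding relabel_def by blast
    moreover have "\<sigma> \<subseteq> r"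
      using \<rho>(2) assms(1) \<open>\<rho> = h ` r\<close> by (simp add: inj_image_subset_iff)
    ultimately show "\<rho> = h ` \<sigma> \<or> \<rho> = h ` \<tau>"
      using st(5) by blast
  qed
qed

lemma sh_step_sym: "sh_step K L \<Longrightarrow> sh_step L K"
  unfolding sh_step_def by blast

lemma sh_steps_relabel_collapses:
  assumes "inj h" "simplicial_complex K" "elementary_collapse\<^sup>*\<^sup>* K L"
  shows "sh_step\<^sup>*\<^sup>* (relabel h K) (relabel h L)"
  using assms(3)
proof (induction rule: rtranclp_induct)
  case (step L L')
  have "simplicial_complex L" "simplicial_complex L'"
    using step.hyps assms(2) simplicial_complex_collapses simplicial_complex_elementary_collapse
    by blast+
  then have "sh_step (relabel h L) (relabel h L')"
    using step.hyps(2) assms(1) unfolding sh_step_def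
    by (simp add: simplicial_complex_relabel elementary_collapse_relabel)
  with step.IH show ?case
    by (rule rtranclp.rtrancl_into_rtrancl)
qed simp

lemma sh_steps_relabel_expansions:
  assumes "inj h" "simplicial_complex K" "elementary_collapse\<^sup>*\<^sup>* K L"
  shows "sh_step\<^sup>*\<^sup>* (relabel h L) (relabel h K)"
proof -
  have "symp sh_step"
    by (blast intro: sympI sh_step_sym)
  then show ?thesis
    using sh_steps_relabel_collapses[OF assms] by (blast dest: sympD[OF symp_rtranclp])
qed

lemma elementary_collapse_maximal_star_face:
  assumes K: "simplicial_complex K" and "s \<noteq> {}" "c \<notin> s"
    and cone: "\<And>\<rho>. \<rho> \<in> K \<Longrightarrow> s \<subseteq> \<rho> \<Longrightarrow> insert c \<rho> \<in> K"
    and \<tau>: "\<tau> \<in> K" "s \<subseteq> \<tau>"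
    and max: "\<And>\<rho>. \<rho> \<in> K \<Longrightarrow> s \<subseteq> \<rho> \<Longrightarrow> card \<rho> \<le> card \<tau>"
  shows "elementary_collapse K (K - {\<tau> - {c}, \<tau>})"
proof -
  have fin: "\<And>\<rho>. \<rho> \<in> K \<Longrightarrow> finite \<rho>"
    using simplicial_complexD(2)[OF K] .
  have "c \<in> \<tau>"
  proof (rule ccontr)
    assume "c \<notin> \<tau>"
    then have "card (insert c \<tau>) = card \<tau> + 1"
      using fin[OF \<tau>(1)] by simp
    moreover have "card (insert c \<tau>) \<le> card \<tau>"
      using \<tau> by (intro max cone) auto
    ultimately show False by simp
  qed
  define \<sigma> where "\<sigma> = \<tau> - {c}"
  have \<tau>_eq: "\<tau> = insert c \<sigma>" "c \<notin> \<sigma>"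
    using \<open>c \<in> \<tau>\<close> unfolding \<sigma>_def by auto
  have "s \<subseteq> \<sigma>"
    using \<tau>(2) \<open>c \<notin> s\<close> unfolding \<sigma>_def by blast
  then have "\<sigma> \<in> K"
    using simplicial_complexD(4)[OF K \<tau>(1)] \<open>s \<noteq> {}\<close> unfolding \<sigma>_def by blast
  have card_\<tau>: "card \<tau> = card \<sigma> + 1"
    using \<tau>_eq fin[OF \<tau>(1)] by simp
  have free: "\<rho> = \<sigma> \<or> \<rho> = \<tau>" if "\<rho> \<in> K" "\<sigma> \<subseteq> \<rho>" for \<rho>
  proof (cases "c \<in> \<rho>")
    case True
    have "\<tau> \<subseteq> \<rho>"
      using True that(2) \<tau>_eq by blast
    moreover have "card \<rho> \<le> card \<tau>"
      using that \<open>s \<subseteq> \<sigma>\<close> by (intro max) auto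
    ultimately show ?thesis
      using card_seteq[OF fin[OF that(1)]] by blast
  next
    case False
    have "card (insert c \<rho>) \<le> card \<tau>"
      using that \<open>s \<subseteq> \<sigma>\<close> by (intro max cone) auto
    then have "card \<rho> \<le> card \<sigma>"
      using False card_\<tau> fin[OF that(1)] by simp
    then show ?thesis
      using card_seteq[OF fin[OF that(1)] that(2)] by blast
  qed
  show ?thesis
    unfolding elementary_collapse_def \<sigma>_def[symmetric]
    using \<open>\<sigma> \<in> K\<close> \<tau>(1) \<tau>_eq card_\<tau> free by blast
qed

text \<open>The hypothesis makes the star of s a cone with apex c; its faces are removed in
  pairs \<open>(\<tau> - {c}, \<tau>)\<close>, largest first.\<close>

lemma collapses_cone_star:
  assumes "simplicial_complex K" "s \<noteq> {}" "c \<notin> s"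
    and "\<And>\<rho>. \<rho> \<in> K \<Longrightarrow> s \<subseteq> \<rho> \<Longrightarrow> insert c \<rho> \<in> K"
  shows "elementary_collapse\<^sup>*\<^sup>* K {\<rho>\<in>K. \<not> s \<subseteq> \<rho>}"
  using assms
proof (induction "card {\<rho>\<in>K. s \<subseteq> \<rho>}" arbitrary: K rule: less_induct)
  case less
  define star where "star = {\<rho>\<in>K. s \<subseteq> \<rho>}"
  have "finite star"
    using simplicial_complexD(1)[OF less.prems(1)] unfolding star_def by simp
  show ?case
  proof (cases "star = {}")
    case True
    then have "{\<rho>\<in>K. \<not> s \<subseteq> \<rho>} = K"
      unfolding star_def by blast
    then show ?thesis by simp
  next
    case False
    obtain \<tau> where "\<tau> \<in> star" and Max_eq: "Max (card ` star) = card \<tau>"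
      using obtains_MAX[OF \<open>finite star\<close> False] by metis
    then have \<tau>: "\<tau> \<in> K" "s \<subseteq> \<tau>"
      unfolding star_def by auto
    have max: "card \<rho> \<le> card \<tau>" if "\<rho> \<in> K" "s \<subseteq> \<rho>" for \<rho>
    proof -
      have "card \<rho> \<in> card ` star"
        using that unfolding star_def by blast
      then show ?thesis
        using Max_ge[OF finite_imageI[OF \<open>finite star\<close>]] Max_eq by metis
    qed
    define K' where "K' = K - {\<tau> - {c}, \<tau>}"
    have collapse: "elementary_collapse K K'"
      unfolding K'_def using elementary_collapse_maximal_star_face[OF less.prems \<tau> max] .
    have "elementary_collapse\<^sup>*\<^sup>* K' {\<rho>\<in>K'. \<not> s \<subseteq> \<rho>}"
    proof (rule less.hyps)
      show "card {\<rho>\<in>K'. s \<subseteq> \<rho>} < card {\<rho>\<in>K. s \<subseteq> \<rho>}"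
        using \<open>finite star\<close> \<tau> unfolding star_def K'_def by (intro psubset_card_mono) auto
      show "simplicial_complex K'"
        using simplicial_complex_elementary_collapse[OF less.prems(1) collapse] .
      show "insert c \<rho> \<in> K'" if "\<rho> \<in> K'" "s \<subseteq> \<rho>" for \<rho>
        using that less.prems(4)[of \<rho>] \<open>c \<notin> s\<close> unfolding K'_def by blast
    qed (use less.prems in auto)
    moreover have "{\<rho>\<in>K'. \<not> s \<subseteq> \<rho>} = {\<rho>\<in>K. \<not> s \<subseteq> \<rho>}"
      using \<tau>(2) \<open>c \<notin> s\<close> unfolding K'_def by blast
    ultimately show ?thesis
      using collapse by (metis converse_rtranclp_into_rtranclp)
  qed
qed

section \<open>A complex and its barycentric subdivision\<close>

definition upward_closed :: "'v set set \<Rightarrow> 'v set set \<Rightarrow> bool" where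
  "upward_closed K D \<longleftrightarrow> (\<forall>F\<in>D. \<forall>G\<in>K. F \<subseteq> G \<longrightarrow> G \<in> D)"

lemma upward_closedD: "upward_closed K D \<Longrightarrow> F \<in> D \<Longrightarrow> G \<in> K \<Longrightarrow> F \<subseteq> G \<Longrightarrow> G \<in> D"
  unfolding upward_closed_def by blast

text \<open>Vertices \<^term>\<open>Inl v\<close> are the vertices of K, vertices \<^term>\<open>Inr F\<close> the
  barycentres of its faces. For D upward closed in K, \<^term>\<open>partial_subdivision K D D\<close> is K
  with the faces in D stellarly subdivided, and for a maximal face s outside D the complex
  \<^term>\<open>partial_subdivision K D (insert s D)\<close> collapses onto both this stage and the next.\<close>

definition old_vertices :: "('v + 'w) set \<Rightarrow> 'v set" where
  "old_vertices \<sigma> = {v. Inl v \<in> \<sigma>}"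

definition barycentres :: "('v + 'w) set \<Rightarrow> 'w set" where
  "barycentres \<sigma> = {F. Inr F \<in> \<sigma>}"

definition partial_subdivision ::
    "'v set set \<Rightarrow> 'v set set \<Rightarrow> 'v set set \<Rightarrow> ('v + 'v set) set set" where
  "partial_subdivision K D E = {\<sigma>. \<sigma> \<noteq> {} \<and> barycentres \<sigma> \<subseteq> E \<and>
     (\<forall>F\<in>barycentres \<sigma>. \<forall>G\<in>barycentres \<sigma>. F \<subseteq> G \<or> G \<subseteq> F) \<and>
     (old_vertices \<sigma> = {} \<or> old_vertices \<sigma> \<in> K - D) \<and> (\<forall>F\<in>barycentres \<sigma>. old_vertices \<sigma> \<subseteq> F)}"

lemma partial_subdivisionI:
  assumes "\<sigma> \<noteq> {}" "barycentres \<sigma> \<subseteq> E"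
    "\<And>F G. F \<in> barycentres \<sigma> \<Longrightarrow> G \<in> barycentres \<sigma> \<Longrightarrow> F \<subseteq> G \<or> G \<subseteq> F"
    "old_vertices \<sigma> = {} \<or> old_vertices \<sigma> \<in> K - D" "\<And>F. F \<in> barycentres \<sigma> \<Longrightarrow> old_vertices \<sigma> \<subseteq> F"
  shows "\<sigma> \<in> partial_subdivision K D E"
  unfolding partial_subdivision_def mem_Collect_eq using assms by (intro conjI ballI) auto

lemma partial_subdivisionD:
  assumes "\<sigma> \<in> partial_subdivision K D E"
  shows "\<sigma> \<noteq> {}" "barycentres \<sigma> \<subseteq> E"
    "\<And>F G. F \<in> barycentres \<sigma> \<Longrightarrow> G \<in> barycentres \<sigma> \<Longrightarrow> F \<subseteq> G \<or> G \<subseteq> F"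
    "old_vertices \<sigma> = {} \<or> old_vertices \<sigma> \<in> K - D" "\<And>F. F \<in> barycentres \<sigma> \<Longrightarrow> old_vertices \<sigma> \<subseteq> F"
  using assms by (simp_all add: partial_subdivision_def)

lemma old_vertices_insert_Inl [simp]: "old_vertices (insert (Inl v) \<sigma>) = insert v (old_vertices \<sigma>)"
  and old_vertices_insert_Inr [simp]: "old_vertices (insert (Inr F) \<sigma>) = old_vertices \<sigma>"
  and barycentres_insert_Inl [simp]: "barycentres (insert (Inl v) \<sigma>) = barycentres \<sigma>"
  and barycentres_insert_Inr [simp]: "barycentres (insert (Inr F) \<sigma>) = insert F (barycentres \<sigma>)"
  unfolding old_vertices_def barycentres_def by auto

lemma simplicial_complex_partial_subdivision:
  fixes K :: "'v::finite set set"
  assumes K: "simplicial_complex K" and "upward_closed K D"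
  shows "simplicial_complex (partial_subdivision K D E)"
proof (rule simplicial_complex_finite_vertexI)
  fix \<sigma> assume "\<sigma> \<in> partial_subdivision K D E"
  then show "\<sigma> \<noteq> {}"
    by (rule partial_subdivisionD(1))
next
  fix \<sigma> \<tau> assume \<sigma>: "\<sigma> \<in> partial_subdivision K D E" and "\<tau> \<subseteq> \<sigma>" "\<tau> \<noteq> {}"
  then have sub: "old_vertices \<tau> \<subseteq> old_vertices \<sigma>" "barycentres \<tau> \<subseteq> barycentres \<sigma>"
    by (auto simp: old_vertices_def barycentres_def)
  have old_\<tau>: "old_vertices \<tau> = {} \<or> old_vertices \<tau> \<in> K - D"
  proof (cases "old_vertices \<tau> = {}")
    case False
    then have "old_vertices \<sigma> \<in> K - D"
      using partial_subdivisionD(4)[OF \<sigma>] sub by blast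
    then have "old_vertices \<tau> \<in> K" "old_vertices \<tau> \<notin> D"
      using simplicial_complexD(4)[OF K _ sub(1) False] upward_closedD[OF assms(2) _ _ sub(1)]
      by blast+
    then show ?thesis
      by blast
  qed simp
  show "\<tau> \<in> partial_subdivision K D E"
  proof (rule partial_subdivisionI[OF \<open>\<tau> \<noteq> {}\<close> _ _ old_\<tau>])
    show "barycentres \<tau> \<subseteq> E"
      using sub(2) partial_subdivisionD(2)[OF \<sigma>] by (rule order_trans)
    show "F \<subseteq> G \<or> G \<subseteq> F" if "F \<in> barycentres \<tau>" "G \<in> barycentres \<tau>" for F G
      using that sub(2) by (intro partial_subdivisionD(3)[OF \<sigma>]) auto
    show "old_vertices \<tau> \<subseteq> F" if "F \<in> barycentres \<tau>" for F
      using that sub partial_subdivisionD(5)[OF \<sigma>, of F] by auto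
  qed
qed

lemma partial_subdivision_delete_barycentre:
  assumes "s \<notin> D"
  shows "{\<tau>\<in>partial_subdivision K D (insert s D). \<not> {Inr s} \<subseteq> \<tau>} = partial_subdivision K D D"
proof (intro set_eqI iffI)
  fix \<tau> assume "\<tau> \<in> {\<tau>\<in>partial_subdivision K D (insert s D). \<not> {Inr s} \<subseteq> \<tau>}"
  then have \<tau>: "\<tau> \<in> partial_subdivision K D (insert s D)" and "s \<notin> barycentres \<tau>"
    by (auto simp: old_vertices_def barycentres_def)
  then show "\<tau> \<in> partial_subdivision K D D"
    using partial_subdivisionD[OF \<tau>] by (intro partial_subdivisionI) blast+
next
  fix \<tau> assume \<tau>: "\<tau> \<in> partial_subdivision K D D"
  then have "s \<notin> barycentres \<tau>"
    using partial_subdivisionD(2)[OF \<tau>] assms by blast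
  moreover have "\<tau> \<in> partial_subdivision K D (insert s D)"
    using partial_subdivisionD[OF \<tau>] by (intro partial_subdivisionI) blast+
  ultimately show "\<tau> \<in> {\<tau>\<in>partial_subdivision K D (insert s D). \<not> {Inr s} \<subseteq> \<tau>}"
    by (auto simp: old_vertices_def barycentres_def)
qed

lemma partial_subdivision_delete_face:
  assumes "s \<noteq> {}" and above: "\<And>G. G \<in> K \<Longrightarrow> s \<subset> G \<Longrightarrow> G \<in> D"
  shows "{\<tau>\<in>partial_subdivision K D (insert s D). \<not> Inl ` s \<subseteq> \<tau>}
    = partial_subdivision K (insert s D) (insert s D)"
proof (intro set_eqI iffI)
  fix \<tau> assume "\<tau> \<in> {\<tau>\<in>partial_subdivision K D (insert s D). \<not> Inl ` s \<subseteq> \<tau>}"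
  then have \<tau>: "\<tau> \<in> partial_subdivision K D (insert s D)" and "old_vertices \<tau> \<noteq> s"
    by (auto simp: old_vertices_def barycentres_def)
  then have "old_vertices \<tau> = {} \<or> old_vertices \<tau> \<in> K - insert s D"
    using partial_subdivisionD(4)[OF \<tau>] by blast
  then show "\<tau> \<in> partial_subdivision K (insert s D) (insert s D)"
    using partial_subdivisionD(1,2,3,5)[OF \<tau>] by (intro partial_subdivisionI) blast+
next
  fix \<tau> assume \<tau>: "\<tau> \<in> partial_subdivision K (insert s D) (insert s D)"
  then have Inl_\<tau>: "old_vertices \<tau> = {} \<or> old_vertices \<tau> \<in> K - insert s D"
    by (rule partial_subdivisionD(4))
  have "\<not> s \<subseteq> old_vertices \<tau>"
  proof
    assume "s \<subseteq> old_vertices \<tau>"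
    then have "old_vertices \<tau> \<in> K - insert s D" "s \<subset> old_vertices \<tau>"
      using Inl_\<tau> \<open>s \<noteq> {}\<close> by auto
    then show False
      using above by blast
  qed
  moreover have "\<tau> \<in> partial_subdivision K D (insert s D)"
    using partial_subdivisionD(1,2,3,5)[OF \<tau>] Inl_\<tau> by (intro partial_subdivisionI) blast+
  ultimately show "\<tau> \<in> {\<tau>\<in>partial_subdivision K D (insert s D). \<not> Inl ` s \<subseteq> \<tau>}"
    by (auto simp: old_vertices_def barycentres_def)
qed

lemma partial_subdivision_collapse_barycentre:
  fixes K :: "'v::finite set set"
  assumes K: "simplicial_complex K" and D: "upward_closed K D" and "s \<in> K" "s \<notin> D"
  shows "elementary_collapse\<^sup>*\<^sup>* (partial_subdivision K D (insert s D)) (partial_subdivision K D D)"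
proof -
  let ?J = "partial_subdivision K D (insert s D)"
  obtain u where "u \<in> s"
    using simplicial_complexD(3)[OF K \<open>s \<in> K\<close>] by blast
  have "insert (Inl u) \<tau> \<in> ?J" if \<tau>: "\<tau> \<in> ?J" "{Inr s} \<subseteq> \<tau>" for \<tau>
  proof -
    have "s \<in> barycentres \<tau>"
      using \<tau>(2) unfolding barycentres_def by simp
    then have old_sub: "old_vertices \<tau> \<subseteq> s"
      by (rule partial_subdivisionD(5)[OF \<tau>(1)])
    then have new_sub: "insert u (old_vertices \<tau>) \<subseteq> s"
      using \<open>u \<in> s\<close> by simp
    have "insert u (old_vertices \<tau>) \<in> K"
      using simplicial_complexD(4)[OF K \<open>s \<in> K\<close> new_sub] by simp
    moreover have "insert u (old_vertices \<tau>) \<notin> D"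
      using upward_closedD[OF D _ \<open>s \<in> K\<close> new_sub] \<open>s \<notin> D\<close> by blast
    moreover have below: "s \<subseteq> F" if F: "F \<in> barycentres \<tau>" for F
    proof -
      have "F \<subseteq> s \<or> s \<subseteq> F"
        using partial_subdivisionD(3)[OF \<tau>(1) F \<open>s \<in> barycentres \<tau>\<close>] .
      moreover have "F \<in> insert s D"
        using partial_subdivisionD(2)[OF \<tau>(1)] F by blast
      ultimately show ?thesis
        using upward_closedD[OF D _ \<open>s \<in> K\<close>] \<open>s \<notin> D\<close> by blast
    qed
    ultimately show ?thesis
      using partial_subdivisionD(2,3)[OF \<tau>(1)] old_sub \<open>u \<in> s\<close>
      by (intro partial_subdivisionI) (auto dest!: below)
  qed
  then have "elementary_collapse\<^sup>*\<^sup>* ?J {\<tau>\<in>?J. \<not> {Inr s} \<subseteq> \<tau>}"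
    by (intro collapses_cone_star simplicial_complex_partial_subdivision[OF K D]) auto
  then show ?thesis
    unfolding partial_subdivision_delete_barycentre[OF \<open>s \<notin> D\<close>] .
qed

lemma partial_subdivision_collapse_face:
  fixes K :: "'v::finite set set"
  assumes K: "simplicial_complex K" and D: "upward_closed K D" and "s \<in> K" "s \<notin> D"
    and above: "\<And>G. G \<in> K \<Longrightarrow> s \<subset> G \<Longrightarrow> G \<in> D"
  shows "elementary_collapse\<^sup>*\<^sup>* (partial_subdivision K D (insert s D))
    (partial_subdivision K (insert s D) (insert s D))"
proof -
  let ?J = "partial_subdivision K D (insert s D)"
  have "s \<noteq> {}"
    using simplicial_complexD(3)[OF K \<open>s \<in> K\<close>] .
  have "insert (Inr s) \<tau> \<in> ?J" if \<tau>: "\<tau> \<in> ?J" "Inl ` s \<subseteq> \<tau>" for \<tau>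
  proof -
    have "s \<subseteq> old_vertices \<tau>"
      using \<tau>(2) unfolding old_vertices_def by blast
    then have "old_vertices \<tau> \<in> K - D"
      using partial_subdivisionD(4)[OF \<tau>(1)] \<open>s \<noteq> {}\<close> by blast
    then have old_eq: "old_vertices \<tau> = s"
      using above \<open>s \<subseteq> old_vertices \<tau>\<close> by blast
    note \<tau>_props = partial_subdivisionD[OF \<tau>(1), unfolded old_eq]
    show ?thesis
    proof (rule partial_subdivisionI)
      show "barycentres (insert (Inr s) \<tau>) \<subseteq> insert s D"
        using \<tau>_props(2) by simp
      show "F \<subseteq> G \<or> G \<subseteq> F"
        if "F \<in> barycentres (insert (Inr s) \<tau>)" "G \<in> barycentres (insert (Inr s) \<tau>)" for F G
        using that \<tau>_props(3,5) unfolding barycentres_insert_Inr insert_iff by blast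
      show "old_vertices (insert (Inr s) \<tau>) \<subseteq> F" if "F \<in> barycentres (insert (Inr s) \<tau>)" for F
        using that \<tau>_props(5) unfolding old_vertices_insert_Inr old_eq by auto
    qed (use \<tau>_props(4) old_eq in simp_all)
  qed
  then have "elementary_collapse\<^sup>*\<^sup>* ?J {\<tau>\<in>?J. \<not> Inl ` s \<subseteq> \<tau>}"
    using \<open>s \<noteq> {}\<close>
    by (intro collapses_cone_star simplicial_complex_partial_subdivision[OF K D]) auto
  then show ?thesis
    using partial_subdivision_delete_face[of s K D] \<open>s \<noteq> {}\<close> above by simp
qed

lemma sh_steps_subdivide_face:
  fixes K :: "'v::finite set set"
  assumes "inj h" "simplicial_complex K" "upward_closed K D" "s \<in> K" "s \<notin> D"
    "\<And>G. G \<in> K \<Longrightarrow> s \<subset> G \<Longrightarrow> G \<in> D"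
  shows "sh_step\<^sup>*\<^sup>* (relabel h (partial_subdivision K D D))
    (relabel h (partial_subdivision K (insert s D) (insert s D)))"
proof -
  have J: "simplicial_complex (partial_subdivision K D (insert s D))"
    using simplicial_complex_partial_subdivision[OF assms(2,3)] .
  show ?thesis
    using sh_steps_relabel_expansions[OF assms(1) J
        partial_subdivision_collapse_barycentre[OF assms(2-5)]]
      sh_steps_relabel_collapses[OF assms(1) J partial_subdivision_collapse_face[OF assms(2-6)]]
    by (rule rtranclp_trans)
qed

lemma sh_steps_subdivide_faces:
  fixes K :: "'v::finite set set"
  assumes "inj h" "simplicial_complex K" "T \<subseteq> K" "upward_closed K (K - T)"
  shows "sh_step\<^sup>*\<^sup>* (relabel h (partial_subdivision K (K - T) (K - T)))
    (relabel h (partial_subdivision K K K))"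
  using finite[of T] assms(3,4)
proof (induction T rule: finite_ranking_induct[where f = card])
  case (insert s T)
  show ?case
  proof (cases "s \<in> T")
    case True
    then show ?thesis
      using insert.IH insert.prems by (simp add: insert_absorb)
  next
    case False
    have "s \<in> K" "T \<subseteq> K"
      using insert.prems(1) by auto
    have above: "G \<notin> T" if "G \<in> K" "s \<subset> G" for G
      using insert.hyps(2)[of G] psubset_card_mono[OF finite that(2)] by auto
    have "upward_closed K (K - T)"
      unfolding upward_closed_def
    proof (intro ballI impI)
      fix F G assume "F \<in> K - T" "G \<in> K" "F \<subseteq> G"
      then show "G \<in> K - T"
        using above upward_closedD[OF insert.prems(2), of F G] by (cases "F = s") auto
    qed
    moreover have "sh_step\<^sup>*\<^sup>* (relabel h (partial_subdivision K (K - insert s T) (K - insert s T)))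
        (relabel h (partial_subdivision K (K - T) (K - T)))"
    proof -
      have "insert s (K - insert s T) = K - T"
        using \<open>s \<in> K\<close> False by blast
      moreover have "G \<in> K - insert s T" if "G \<in> K" "s \<subset> G" for G
        using that above by blast
      ultimately show ?thesis
        using sh_steps_subdivide_face[OF assms(1,2) insert.prems(2) \<open>s \<in> K\<close>] by simp
    qed
    ultimately show ?thesis
      using insert.IH[OF \<open>T \<subseteq> K\<close>] by (blast intro: rtranclp_trans)
  qed
qed simp

lemma old_vertices_barycentres_decompose: "\<sigma> = Inl ` old_vertices \<sigma> \<union> Inr ` barycentres \<sigma>"
  unfolding old_vertices_def barycentres_def
proof (rule set_eqI)
  show "x \<in> \<sigma> \<longleftrightarrow> x \<in> Inl ` {v. Inl v \<in> \<sigma>} \<union> Inr ` {F. Inr F \<in> \<sigma>}" for x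
    by (cases x) auto
qed

lemma partial_subdivision_empty:
  fixes K :: "'v set set"
  assumes "simplicial_complex K"
  shows "partial_subdivision K {} {} = relabel Inl K"
proof (intro set_eqI iffI)
  fix \<sigma> assume \<sigma>: "\<sigma> \<in> partial_subdivision K {} {}"
  then have "\<sigma> = Inl ` old_vertices \<sigma>"
    using partial_subdivisionD(2)[OF \<sigma>] old_vertices_barycentres_decompose[of \<sigma>] by simp
  moreover have "old_vertices \<sigma> \<in> K"
    using partial_subdivisionD(1,4)[OF \<sigma>] calculation by auto
  ultimately show "\<sigma> \<in> relabel Inl K"
    unfolding relabel_def by blast
next
  fix \<sigma> :: "('v + 'v set) set" assume "\<sigma> \<in> relabel Inl K"
  then obtain A where "A \<in> K" "\<sigma> = Inl ` A"
    unfolding relabel_def by blast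
  moreover have "A \<noteq> {}"
    using simplicial_complexD(3)[OF assms \<open>A \<in> K\<close>] .
  moreover have "old_vertices \<sigma> = A" "barycentres \<sigma> = {}"
    unfolding old_vertices_def barycentres_def \<open>\<sigma> = Inl ` A\<close> by auto
  ultimately show "\<sigma> \<in> partial_subdivision K {} {}"
    by (intro partial_subdivisionI) auto
qed

lemma partial_subdivision_full:
  fixes K :: "'v::finite set set"
  shows "partial_subdivision K K K = relabel Inr (barycentric K)"
proof (intro set_eqI iffI)
  fix \<sigma> assume \<sigma>: "\<sigma> \<in> partial_subdivision K K K"
  then have "\<sigma> = Inr ` barycentres \<sigma>"
    using partial_subdivisionD(4)[OF \<sigma>] old_vertices_barycentres_decompose[of \<sigma>] by simp
  moreover have "barycentres \<sigma> \<in> barycentric K"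
    unfolding barycentric_def order_complex_def
    using partial_subdivisionD(1-3)[OF \<sigma>] calculation by auto
  ultimately show "\<sigma> \<in> relabel Inr (barycentric K)"
    unfolding relabel_def by blast
next
  fix \<sigma> :: "('v + 'v set) set" assume "\<sigma> \<in> relabel Inr (barycentric K)"
  then obtain C where C: "C \<in> barycentric K" "\<sigma> = Inr ` C"
    unfolding relabel_def by blast
  moreover have "old_vertices \<sigma> = {}" "barycentres \<sigma> = C"
    unfolding old_vertices_def barycentres_def C(2) by auto
  ultimately show "\<sigma> \<in> partial_subdivision K K K"
    unfolding barycentric_def order_complex_def by (intro partial_subdivisionI) auto
qed

theorem sh_steps_barycentric:
  fixes K :: "'v::finite set set" and h :: "'v + 'v set \<Rightarrow> nat"
  assumes "inj h" "simplicial_complex K"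
  shows "sh_step\<^sup>*\<^sup>* (relabel (h \<circ> Inl) K) (relabel (h \<circ> Inr) (barycentric K))"
  using sh_steps_subdivide_faces[OF assms order_refl]
  by (simp add: upward_closed_def partial_subdivision_empty[OF assms(2)] partial_subdivision_full
      relabel_comp[symmetric])

lemma same_simple_homotopy_type_if_barycentric_collapses:
  fixes K :: "'v::finite set set" and M :: "'w set set"
  assumes K: "simplicial_complex K" and "simplicial_complex M" "inj g"
    and collapse: "elementary_collapse\<^sup>*\<^sup>* (barycentric K) (relabel g M)"
  shows "same_simple_homotopy_type K M"
proof -
  obtain h :: "'v + 'v set \<Rightarrow> nat" where "inj h"
    using finite_imp_inj_to_nat_seg[OF finite_UNIV] by blast
  then have "inj (h \<circ> Inl)" "inj (h \<circ> Inr)" "inj (h \<circ> Inr \<circ> g)"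
    using \<open>inj g\<close> by (simp_all add: inj_compose)
  moreover have "sh_step\<^sup>*\<^sup>* (relabel (h \<circ> Inl) K) (relabel (h \<circ> Inr \<circ> g) M)"
    using rtranclp_trans[OF sh_steps_barycentric[OF \<open>inj h\<close> K]
        sh_steps_relabel_collapses[OF \<open>inj (h \<circ> Inr)\<close> simplicial_complex_barycentric[OF K] collapse]]
    by (simp add: relabel_comp)
  ultimately show ?thesis
    using K \<open>simplicial_complex M\<close> unfolding same_simple_homotopy_type_def relabel_def
    by (meson inj_on_subset subset_UNIV)
qed

section \<open>Collapsing a barycentric subdivision onto closed faces\<close>

lemma order_complex_collapses_delete_dominated:
  assumes "finite P" "y \<in> P" "y \<noteq> x"
    and dominated: "\<And>z. z \<in> P \<Longrightarrow> le x z \<or> le z x \<Longrightarrow> le y z \<or> le z y"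
  shows "elementary_collapse\<^sup>*\<^sup>* (order_complex P le) (order_complex (P - {x}) le)"
proof -
  have "insert y c \<in> order_complex P le" if "c \<in> order_complex P le" "{x} \<subseteq> c" for c
  proof -
    have c: "c \<subseteq> P" "finite c" "\<And>z w. z \<in> c \<Longrightarrow> w \<in> c \<Longrightarrow> le z w \<or> le w z"
      using that(1) unfolding order_complex_def by auto
    have "x \<in> c"
      using that(2) by simp
    have y_comparable: "le y z \<or> le z y" if "z \<in> c" for z
      using dominated c(1) that c(3)[OF \<open>x \<in> c\<close> that] by blast
    then have "le y y"
      using dominated[OF \<open>y \<in> P\<close>] \<open>x \<in> c\<close> by blast
    then show ?thesis
      unfolding order_complex_def using c y_comparable \<open>y \<in> P\<close> by auto
  qed
  then have "elementary_collapse\<^sup>*\<^sup>* (order_complex P le) {c \<in> order_complex P le. \<not> {x} \<subseteq> c}"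
    using assms(1,3) by (intro collapses_cone_star simplicial_complex_order_complex) auto
  moreover have "{c \<in> order_complex P le. \<not> {x} \<subseteq> c} = order_complex (P - {x}) le"
    unfolding order_complex_def by blast
  ultimately show ?thesis
    by simp
qed

lemma barycentric_collapses_delete_nonclosed:
  assumes K: "simplicial_complex K" and "C \<subseteq> K"
    and closed: "\<And>p. p \<in> K \<Longrightarrow> cl p \<in> C"
    and extensive: "\<And>p. p \<in> K \<Longrightarrow> p \<subseteq> cl p"
    and least: "\<And>p F. p \<in> K \<Longrightarrow> F \<in> C \<Longrightarrow> p \<subseteq> F \<Longrightarrow> cl p \<subseteq> F"
    and "x \<in> K - C" "S \<subseteq> K - C" "x \<notin> S" and max: "\<And>y. y \<in> S \<Longrightarrow> card y \<le> card x"
  shows "elementary_collapse\<^sup>*\<^sup>* (barycentric (C \<union> insert x S)) (barycentric (C \<union> S))"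
proof -
  have "x \<in> K" "x \<notin> C"
    using \<open>x \<in> K - C\<close> by auto
  have "C \<union> insert x S \<subseteq> K"
    using \<open>C \<subseteq> K\<close> \<open>x \<in> K\<close> \<open>S \<subseteq> K - C\<close> by blast
  then have fin: "finite (C \<union> insert x S)"
    using simplicial_complexD(1)[OF K] by (rule finite_subset)
  have cl_mem: "cl x \<in> C \<union> insert x S"
    using closed[OF \<open>x \<in> K\<close>] by blast
  have cl_neq: "cl x \<noteq> x"
    using closed[OF \<open>x \<in> K\<close>] \<open>x \<notin> C\<close> by metis
  have dominated: "cl x \<subseteq> z \<or> z \<subseteq> cl x" if "z \<in> C \<union> insert x S" "x \<subseteq> z \<or> z \<subseteq> x" for z
  proof (cases "z \<subseteq> x")
    case True
    then show ?thesis
      using extensive[OF \<open>x \<in> K\<close>] by blast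
  next
    case False
    then have "x \<subseteq> z"
      using that(2) by blast
    moreover have "z = x" if "z \<in> S"
      using max[OF that] card_seteq[OF simplicial_complexD(2)[OF K]] \<open>x \<subseteq> z\<close>
        \<open>S \<subseteq> K - C\<close> that by blast
    ultimately show ?thesis
      using that(1) least[OF \<open>x \<in> K\<close>] extensive[OF \<open>x \<in> K\<close>] by blast
  qed
  have "elementary_collapse\<^sup>*\<^sup>* (barycentric (C \<union> insert x S))
      (barycentric (C \<union> insert x S - {x}))"
    unfolding barycentric_def
    by (rule order_complex_collapses_delete_dominated[where le = "(\<subseteq>)",
          OF fin cl_mem cl_neq dominated])
  moreover have "C \<union> insert x S - {x} = C \<union> S"
    using \<open>x \<notin> C\<close> \<open>x \<notin> S\<close> by blast
  ultimately show ?thesis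
    by simp
qed

lemma barycentric_collapses_closed_faces:
  assumes K: "simplicial_complex K" and "C \<subseteq> K"
    and closed: "\<And>p. p \<in> K \<Longrightarrow> cl p \<in> C"
    and extensive: "\<And>p. p \<in> K \<Longrightarrow> p \<subseteq> cl p"
    and least: "\<And>p F. p \<in> K \<Longrightarrow> F \<in> C \<Longrightarrow> p \<subseteq> F \<Longrightarrow> cl p \<subseteq> F"
  shows "elementary_collapse\<^sup>*\<^sup>* (barycentric K) (barycentric C)"
proof -
  have "finite (K - C)"
    using simplicial_complexD(1)[OF K] by simp
  have "elementary_collapse\<^sup>*\<^sup>* (barycentric (C \<union> S)) (barycentric C)" if "S \<subseteq> K - C" for S
    using finite_subset[OF that \<open>finite (K - C)\<close>] that
  proof (induction S rule: finite_ranking_induct[where f = card])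
    case (insert x S)
    show ?case
    proof (cases "x \<in> S")
      case True
      then show ?thesis
        using insert.IH insert.prems by (simp add: insert_absorb)
    next
      case False
      have "x \<in> K - C" "S \<subseteq> K - C"
        using insert.prems by auto
      with False show ?thesis
        using barycentric_collapses_delete_nonclosed[OF assms] insert.hyps(2) insert.IH
        by (blast intro: rtranclp_trans)
    qed
  qed simp
  from this[of "K - C"] show ?thesis
    using \<open>C \<subseteq> K\<close> by (simp add: Un_absorb1)
qed

section \<open>The atom crosscut complex\<close>

lemma order_complex_image:
  assumes "finite P" and embedding: "\<And>x y. x \<in> P \<Longrightarrow> y \<in> P \<Longrightarrow> le' (f x) (f y) \<longleftrightarrow> le x y"
  shows "order_complex (f ` P) le' = relabel f (order_complex P le)"
proof (intro set_eqI iffI)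
  fix c' assume c': "c' \<in> order_complex (f ` P) le'"
  define c where "c = {x \<in> P. f x \<in> c'}"
  have "c' = f ` c"
    using c' unfolding c_def order_complex_def by blast
  moreover have "le x y \<or> le y x" if "x \<in> c" "y \<in> c" for x y
    using that c' embedding[of x y] embedding[of y x] unfolding c_def order_complex_def by auto
  then have "c \<in> order_complex P le"
    using c' \<open>finite P\<close> \<open>c' = f ` c\<close> unfolding c_def order_complex_def by auto
  ultimately show "c' \<in> relabel f (order_complex P le)"
    unfolding relabel_def by blast
next
  fix c' assume "c' \<in> relabel f (order_complex P le)"
  then obtain c where "c \<in> order_complex P le" "c' = f ` c"
    unfolding relabel_def by blast
  moreover have "le' (f x) (f y) \<or> le' (f y) (f x)" if "x \<in> c" "y \<in> c" for x y
    using that calculation(1) embedding[of x y] embedding[of y x]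
    unfolding order_complex_def by auto
  ultimately show "c' \<in> order_complex (f ` P) le'"
    unfolding order_complex_def by auto
qed

lemma atoms_below_mono: "x \<le> y \<Longrightarrow> atoms_below x \<subseteq> atoms_below y"
  unfolding atoms_below_def by auto

lemma Sup_atoms_below:
  assumes "atomic_lattice TYPE('a::complete_lattice)"
  shows "Sup (atoms_below (x::'a)) = x"
proof (rule antisym)
  show "Sup (atoms_below x) \<le> x"
    unfolding atoms_below_def by (rule Sup_least) simp
  obtain S where "S \<subseteq> lattice_atoms" "x = Sup S"
    using assms unfolding atomic_lattice_def by blast
  then have "S \<subseteq> atoms_below x"
    unfolding atoms_below_def by (auto intro: Sup_upper)
  then show "x \<le> Sup (atoms_below x)"
    using \<open>x = Sup S\<close> by (simp add: Sup_subset_mono)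
qed

lemma atoms_below_subset_iff:
  assumes "atomic_lattice TYPE('a::complete_lattice)"
  shows "atoms_below (x::'a) \<subseteq> atoms_below y \<longleftrightarrow> x \<le> y"
  using Sup_subset_mono[of "atoms_below x" "atoms_below y"] atoms_below_mono[of x y]
  unfolding Sup_atoms_below[OF assms] by blast

lemma atoms_below_in_atom_crosscut:
  assumes "atomic_lattice TYPE('a::complete_lattice)" "(x::'a) \<in> proper_part"
  shows "atoms_below x \<in> atom_crosscut"
proof -
  have "Sup (atoms_below x) \<noteq> bot" "Sup (atoms_below x) \<noteq> top"
    using assms(2) unfolding Sup_atoms_below[OF assms(1)] proper_part_def by auto
  then show ?thesis
    unfolding atom_crosscut_def atoms_below_def by auto
qed

lemma Sup_atom_crosscut_in_proper_part:
  assumes "\<sigma> \<in> atom_crosscut"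
  shows "Sup \<sigma> \<in> proper_part"
proof -
  obtain a where "a \<in> \<sigma>" "bot < a"
    using assms unfolding atom_crosscut_def lattice_atoms_def by blast
  then have "Sup \<sigma> \<noteq> bot"
    by (metis Sup_bot_conv(1) less_irrefl)
  then show ?thesis
    using assms unfolding atom_crosscut_def proper_part_def by simp
qed

lemma subset_atoms_below_Sup: "\<sigma> \<subseteq> lattice_atoms \<Longrightarrow> \<sigma> \<subseteq> atoms_below (Sup \<sigma>)"
  unfolding atoms_below_def by (auto intro: Sup_upper)

lemma atoms_below_Sup_least:
  assumes "\<sigma> \<subseteq> atoms_below y"
  shows "atoms_below (Sup \<sigma>) \<subseteq> atoms_below y"
proof (rule atoms_below_mono)
  show "Sup \<sigma> \<le> y"
    using assms unfolding atoms_below_def by (auto intro: Sup_least)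
qed

lemma simplicial_complex_atom_crosscut:
  "simplicial_complex (atom_crosscut :: 'a::{finite, complete_lattice} set set)"
proof (rule simplicial_complex_finite_vertexI)
  fix \<sigma> \<tau> :: "'a set" assume "\<sigma> \<in> atom_crosscut" "\<tau> \<subseteq> \<sigma>" "\<tau> \<noteq> {}"
  moreover have "Sup \<tau> \<le> Sup \<sigma>"
    using \<open>\<tau> \<subseteq> \<sigma>\<close> by (rule Sup_subset_mono)
  ultimately show "\<tau> \<in> atom_crosscut"
    unfolding atom_crosscut_def using top.extremum_unique by fastforce
qed (simp add: atom_crosscut_def)

lemma inj_atoms_below:
  assumes "atomic_lattice TYPE('a::complete_lattice)"
  shows "inj (atoms_below :: 'a \<Rightarrow> 'a set)"
  using atoms_below_subset_iff[OF assms] by (intro injI) (metis antisym order_refl)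

lemma barycentric_atom_crosscut_collapses:
  assumes "atomic_lattice TYPE('a::{finite, complete_lattice})"
  shows "elementary_collapse\<^sup>*\<^sup>* (barycentric (atom_crosscut :: 'a set set))
    (relabel atoms_below (order_complex proper_part (\<le>)))"
proof -
  have "elementary_collapse\<^sup>*\<^sup>* (barycentric (atom_crosscut :: 'a set set))
      (barycentric (atoms_below ` proper_part))"
  proof (rule barycentric_collapses_closed_faces[OF simplicial_complex_atom_crosscut,
        where cl = "\<lambda>\<sigma>. atoms_below (Sup \<sigma>)"])
    show "atoms_below ` proper_part \<subseteq> (atom_crosscut :: 'a set set)"
      using atoms_below_in_atom_crosscut[OF assms] by blast
    fix \<sigma> :: "'a set" assume "\<sigma> \<in> atom_crosscut"
    then show "atoms_below (Sup \<sigma>) \<in> atoms_below ` proper_part"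
      using Sup_atom_crosscut_in_proper_part by blast
    show "\<sigma> \<subseteq> atoms_below (Sup \<sigma>)"
      using \<open>\<sigma> \<in> atom_crosscut\<close> subset_atoms_below_Sup unfolding atom_crosscut_def by blast
    show "atoms_below (Sup \<sigma>) \<subseteq> F" if "F \<in> atoms_below ` proper_part" "\<sigma> \<subseteq> F" for F
      using that atoms_below_Sup_least by blast
  qed
  moreover have "barycentric (atoms_below ` proper_part)
      = relabel atoms_below (order_complex (proper_part :: 'a set) (\<le>))"
    unfolding barycentric_def
    by (rule order_complex_image) (simp_all add: atoms_below_subset_iff[OF assms])
  ultimately show ?thesis
    by simp
qed

theorem mainTheorem2:
  assumes "atomic_lattice TYPE('a::{finite, complete_lattice})"
  shows "collapses_onto (barycentric (atom_crosscut :: 'a set set))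
            ((\<lambda>c. atoms_below ` c) ` order_complex (proper_part :: 'a set) (\<le>))
       \<and> same_simple_homotopy_type (atom_crosscut :: 'a set set)
            (order_complex (proper_part :: 'a set) (\<le>))"
proof
  have \<Gamma>: "simplicial_complex (atom_crosscut :: 'a set set)"
    by (rule simplicial_complex_atom_crosscut)
  note collapse = barycentric_atom_crosscut_collapses[OF assms]
  show "collapses_onto (barycentric (atom_crosscut :: 'a set set))
      ((\<lambda>c. atoms_below ` c) ` order_complex (proper_part :: 'a set) (\<le>))"
    using simplicial_complex_barycentric[OF \<Gamma>] collapse
    unfolding collapses_onto_def relabel_def by blast
  show "same_simple_homotopy_type (atom_crosscut :: 'a set set)
      (order_complex (proper_part :: 'a set) (\<le>))"
    using same_simple_homotopy_type_if_barycentric_collapses[OF \<Gamma>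
        simplicial_complex_order_complex[OF finite] inj_atoms_below[OF assms] collapse] .
qed

end
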